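(* For each $\mathbf b\in\mathcal B$, the $\mathbb C$-linear map $g_{\mathbf b}:S_0\to\mathbb C$ defined by $g_{\mathbf b}(x^u)=g^{(\mathbf b)}_u$ ($u\in M$) vanishes on $\sum_{i=1}^nD_{i,0}S_0$, and the induced functionals $\{g_{\mathbf b}\}_{\mathbf b\in\mathcal B}$ form the basis of $\mathrm{Hom}_{\mathbb C}(\mathcal W_0,\mathbb C)$ dual to the basis $\{x^{\mathbf b}\}_{\mathbf b\in\mathcal B}$ of $\mathcal W_0$.
   Context: Let $A=\{\mathbf a_1,\dots,\mathbf a_m\}\subseteq\mathbb Z^n$ be linearly independent over $\mathbb R$ and $\ell_1,\dots,\ell_m$ positive integers (part of a relation $\ell_0\mathbf a_0=\sum_j\ell_j\mathbf a_j$, $\ell_0=\sum_j\ell_j$, $\mathbf a_0\in\mathbb Z^n$, $\gcd(\ell_0,\dots,\ell_m)=1$). Let $f_0=\sum_{j=1}^m\ell_jx^{\mathbf a_j}$. Let $V$ be the real span of $A$, $V_{\mathbb Z}=V\cap\mathbb Z^n$, $C(A)$ the real cone generated by $A$, $M=V_{\mathbb Z}\cap C(A)$. Let $S_0$ be the $\mathbb C$-span of $\{x^u:u\in M\}$, $D_{i,0}=x_i\partial/\partial x_i+x_i\partial f_0/\partial x_i$ ($i=1,\dots,n$), and $\mathcal W_0=S_0/\sum_iD_{i,0}S_0$ (which has basis $\{x^{\mathbf b}:\mathbf b\in\mathcal B\}$). Let $P(A)=\{\sum_jc_j\mathbf a_j:0\le c_j<1\}$ and $\mathcal B=V_{\mathbb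 Z}\cap P(A)$. For $z\in\mathbb C$, $l\in\mathbb Z$: $[z]_0=1$, $[z]_l=1/((z+1)\cdots(z+l))$ for $l>0$, $[z]_l=z(z-1)\cdots(z+l+1)$ for $l<0$. For $\mathbf b=\sum_jv_j\mathbf a_j\in\mathcal B$ ($v_j\in[0,1)$) and $u\in M$, let $g^{(\mathbf b)}_u=\prod_{j=1}^m[-v_j]_{s_j}\ell_j^{s_j}$ if $u=\sum_j(v_j-s_j)\mathbf a_j$ with all $s_j\in\mathbb Z_{\le0}$, and $g^{(\mathbf b)}_u=0$ otherwise (these are the coefficients of $\prod_j\ell_j^{v_j}g_j(\ell_jx^{\mathbf a_j})=\sum_ug^{(\mathbf b)}_ux^{-u}$, $g_j(t)=\sum_{s\le0}[-v_j]_st^{-v_j+s}$). *)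

theory Defs
  imports "HOL-Analysis.Analysis"
begin

text \<open>Exponent vectors live in int^'n (the lattice Z^n); rvec embeds them into R^n.
  The set A is given as a_1,...,a_m via a function a on the index set {1..m}.\<close>

definition rvec :: "int^'n::finite \<Rightarrow> real^'n" where
  "rvec u = (\<chi> i. real_of_int (u $ i))"

definition Vspace :: "(nat \<Rightarrow> int^'n::finite) \<Rightarrow> nat \<Rightarrow> (real^'n) set" where
  "Vspace a m = span (rvec ` a ` {1..m})"

definition coneA :: "(nat \<Rightarrow> int^'n::finite) \<Rightarrow> nat \<Rightarrow> (real^'n) set" where
  "coneA a m = {w. \<exists>c. (\<forall>j\<in>{1..m}. 0 \<le> c j) \<and> w = (\<Sum>j=1..m. c j *\<^sub>R rvec (a j))}"

definition parA :: "(nat \<Rightarrow> int^'n::finite) \<Rightarrow> nat \<Rightarrow> (real^'n) set" where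
  "parA a m = {w. \<exists>c. (\<forall>j\<in>{1..m}. 0 \<le> c j \<and> c j < 1) \<and> w = (\<Sum>j=1..m. c j *\<^sub>R rvec (a j))}"

definition Mset :: "(nat \<Rightarrow> int^'n::finite) \<Rightarrow> nat \<Rightarrow> (int^'n) set" where
  "Mset a m = {u. rvec u \<in> Vspace a m \<and> rvec u \<in> coneA a m}"

definition Bset :: "(nat \<Rightarrow> int^'n::finite) \<Rightarrow> nat \<Rightarrow> (int^'n) set" where
  "Bset a m = {u. rvec u \<in> Vspace a m \<and> rvec u \<in> parA a m}"

text \<open>S_0: Laurent polynomials sum_u h(u) x^u with finite support contained in M,
  represented by their coefficient functions.\<close>
definition S0 :: "(nat \<Rightarrow> int^'n::finite) \<Rightarrow> nat \<Rightarrow> (int^'n \<Rightarrow> complex) set" where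
  "S0 a m = {h. finite {u. h u \<noteq> 0} \<and> {u. h u \<noteq> 0} \<subseteq> Mset a m}"

definition xmon :: "int^'n::finite \<Rightarrow> (int^'n \<Rightarrow> complex)" where
  "xmon u = (\<lambda>v. if v = u then 1 else 0)"

text \<open>D_{i,0} = x_i d/dx_i + x_i (d f_0/dx_i), f_0 = sum_j l_j x^{a_j}, acting on
  coefficient functions: D_{i,0}(x^u) = u_i x^u + sum_j l_j (a_j)_i x^{u+a_j}.\<close>
definition Dop :: "(nat \<Rightarrow> int^'n::finite) \<Rightarrow> (nat \<Rightarrow> nat) \<Rightarrow> nat \<Rightarrow> 'n
                   \<Rightarrow> (int^'n \<Rightarrow> complex) \<Rightarrow> (int^'n \<Rightarrow> complex)" where
  "Dop a l m i h = (\<lambda>v. of_int (v $ i) * h v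
        + (\<Sum>j=1..m. of_nat (l j) * of_int (a j $ i) * h (v - a j)))"

definition brk :: "complex \<Rightarrow> int \<Rightarrow> complex" where
  "brk z l = (if l = 0 then 1
              else if l > 0 then 1 / (\<Prod>k=1..nat l. z + of_nat k)
              else (\<Prod>k=0..<nat (- l). z - of_nat k))"

definition gcoef :: "(nat \<Rightarrow> int^'n::finite) \<Rightarrow> (nat \<Rightarrow> nat) \<Rightarrow> nat
                     \<Rightarrow> int^'n \<Rightarrow> int^'n \<Rightarrow> complex" where
  "gcoef a l m b u =
    (let P = (\<lambda>(v::nat \<Rightarrow> real, s::nat \<Rightarrow> int).
                (\<forall>j\<in>{1..m}. 0 \<le> v j \<and> v j < 1 \<and> s j \<le> 0)
              \<and> rvec b = (\<Sum>j=1..m. v j *\<^sub>R rvec (a j))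
              \<and> rvec u = (\<Sum>j=1..m. (v j - real_of_int (s j)) *\<^sub>R rvec (a j)))
     in if \<exists>p. P p then
          (case (SOME p. P p) of (v, s) \<Rightarrow>
             \<Prod>j=1..m. brk (- complex_of_real (v j)) (s j) * (of_nat (l j)) powi (s j))
        else 0)"

definition gfun :: "(nat \<Rightarrow> int^'n::finite) \<Rightarrow> (nat \<Rightarrow> nat) \<Rightarrow> nat
                    \<Rightarrow> int^'n \<Rightarrow> (int^'n \<Rightarrow> complex) \<Rightarrow> complex" where
  "gfun a l m b h = (\<Sum>u\<in>{u. h u \<noteq> 0}. h u * gcoef a l m b u)"

end

theory Submission
  imports Defs
begin

(* Write u in M as u = sum_j c_j a_j with all c_j >= 0. Under the pairing <h, g> = sum_u h(u) g(u)
   the operator D_{i,0} is transposed to g |-> (u |-> u_i g(u) + sum_j l_j (a_j)_i g(u + a_j)), so a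
   functional kills sum_i D_{i,0} S_0 exactly when its values on the monomials solve this adjoint
   system on M. The coefficients of g_b satisfy l_k g(u + a_k) = -c_k g(u), and since
   u_i = sum_j c_j (a_j)_i they solve it. Conversely, the a_j being linearly independent, a solution
   vanishing at u vanishes at every u + a_k, so by induction on sum_j floor(c_j) a solution is
   determined by its values on B, where the g_b are the dual basis of the monomials. *)

lemma rvec_add: "rvec (u + v) = rvec u + rvec v"
  by (simp add: rvec_def vec_eq_iff)

lemma rvec_component: "rvec u $ i = real_of_int (u $ i)"
  by (simp add: rvec_def)

lemma rvec_eq_iff [simp]: "rvec u = rvec v \<longleftrightarrow> u = v"
  by (simp add: rvec_def vec_eq_iff)

lemma independent_family_coeffs_zero:
  fixes r :: "'i \<Rightarrow> 'a::real_vector"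
  assumes indep: "independent (r ` I)" and inj: "inj_on r I" and fin: "finite I"
    and zero: "(\<Sum>j\<in>I. c j *\<^sub>R r j) = 0" and j: "j \<in> I"
  shows "c j = 0"
proof (rule ccontr)
  assume "c j \<noteq> 0"
  define u where "u v = c (the_inv_into I r v)" for v
  have "u (r j) \<noteq> 0"
    using \<open>c j \<noteq> 0\<close> j by (simp add: u_def the_inv_into_f_f[OF inj])
  moreover have "(\<Sum>v\<in>r ` I. u v *\<^sub>R v) = 0"
    using zero by (simp add: u_def sum.reindex[OF inj] the_inv_into_f_f[OF inj])
  ultimately have "dependent (r ` I)"
    using j fin by (subst real_vector.dependent_finite) auto
  with indep show False by contradiction
qed

lemma sum_in_Vspace: "(\<Sum>j=1..m. c j *\<^sub>R rvec (a j)) \<in> Vspace a m"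
  unfolding Vspace_def by (intro span_sum span_scale span_base) auto

lemma mem_Mset_iff:
  "u \<in> Mset a m \<longleftrightarrow> (\<exists>c. (\<forall>j\<in>{1..m}. 0 \<le> c j) \<and> rvec u = (\<Sum>j=1..m. c j *\<^sub>R rvec (a j)))"
  unfolding Mset_def coneA_def using sum_in_Vspace by auto

lemma mem_Bset_iff:
  "u \<in> Bset a m \<longleftrightarrow>
     (\<exists>c. (\<forall>j\<in>{1..m}. 0 \<le> c j \<and> c j < 1) \<and> rvec u = (\<Sum>j=1..m. c j *\<^sub>R rvec (a j)))"
  unfolding Bset_def parA_def using sum_in_Vspace by auto

lemma sum_scaleR_add_delta:
  fixes r :: "nat \<Rightarrow> 'a::real_vector"
  assumes "k \<in> K" "finite K"
  shows "(\<Sum>j\<in>K. (c j + (if j = k then 1 else 0)) *\<^sub>R r j) = (\<Sum>j\<in>K. c j *\<^sub>R r j) + r k"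
  using assms by (simp add: scaleR_add_left sum.distrib if_distrib[of "\<lambda>x. x *\<^sub>R _"] cong: if_cong)

lemma Mset_add_generator:
  assumes "u \<in> Mset a m" "k \<in> {1..m}"
  shows "u + a k \<in> Mset a m"
proof -
  obtain c where c: "\<forall>j\<in>{1..m}. 0 \<le> c j" "rvec u = (\<Sum>j=1..m. c j *\<^sub>R rvec (a j))"
    using assms(1) unfolding mem_Mset_iff by blast
  then have "rvec (u + a k) = (\<Sum>j=1..m. (c j + (if j = k then 1 else 0)) *\<^sub>R rvec (a j))"
    using assms(2) by (simp add: rvec_add sum_scaleR_add_delta)
  moreover have "\<forall>j\<in>{1..m}. 0 \<le> c j + (if j = k then 1 else 0)"
    using c(1) by simp
  ultimately show ?thesis
    unfolding mem_Mset_iff by (intro exI[of _ "\<lambda>j. c j + (if j = k then 1 else 0)"]) simp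
qed

lemma finite_Bset: "finite (Bset a m)"
proof -
  define K where "K i = (\<Sum>j=1..m. \<bar>a j $ i\<bar>)" for i
  have bound: "\<bar>u $ i\<bar> \<le> K i" if "u \<in> Bset a m" for u i
  proof -
    obtain c where c: "\<forall>j\<in>{1..m}. 0 \<le> c j \<and> c j < 1" "rvec u = (\<Sum>j=1..m. c j *\<^sub>R rvec (a j))"
      using \<open>u \<in> Bset a m\<close> unfolding mem_Bset_iff by blast
    have "\<bar>real_of_int (u $ i)\<bar> = \<bar>\<Sum>j=1..m. c j * real_of_int (a j $ i)\<bar>"
      using arg_cong[OF c(2), of "\<lambda>x. x $ i"] by (simp add: rvec_component)
    also have "\<dots> \<le> (\<Sum>j=1..m. \<bar>c j\<bar> * \<bar>real_of_int (a j $ i)\<bar>)"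
      by (rule order_trans[OF sum_abs]) (simp add: abs_mult)
    also have "\<dots> \<le> real_of_int (K i)"
      unfolding K_def of_int_sum of_int_abs
      by (intro sum_mono mult_left_le_one_le) (use c(1) in \<open>fastforce+\<close>)
    finally show ?thesis by linarith
  qed
  have "Bset a m \<subseteq> vec_lambda ` (\<Pi>\<^sub>E i\<in>UNIV. {- K i..K i})"
  proof
    fix u assume "u \<in> Bset a m"
    then have "vec_nth u \<in> (\<Pi>\<^sub>E i\<in>UNIV. {- K i..K i})"
      using bound[of u] by (auto simp: abs_le_iff minus_le_iff)
    then show "u \<in> vec_lambda ` (\<Pi>\<^sub>E i\<in>UNIV. {- K i..K i})"
      by (rule image_eqI[rotated]) simp
  qed
  moreover have "finite (vec_lambda ` (\<Pi>\<^sub>E i\<in>UNIV. {- K i..K i}))"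
    by (intro finite_imageI finite_PiE) auto
  ultimately show ?thesis by (rule finite_subset)
qed

definition shift_repr ::
    "(nat \<Rightarrow> int^'n::finite) \<Rightarrow> nat \<Rightarrow> int^'n \<Rightarrow> int^'n \<Rightarrow> (nat \<Rightarrow> real) \<Rightarrow> (nat \<Rightarrow> int) \<Rightarrow> bool"
  where "shift_repr a m b u v s \<longleftrightarrow>
    (\<forall>j\<in>{1..m}. 0 \<le> v j \<and> v j < 1 \<and> s j \<le> 0)
    \<and> rvec b = (\<Sum>j=1..m. v j *\<^sub>R rvec (a j))
    \<and> rvec u = (\<Sum>j=1..m. (v j - real_of_int (s j)) *\<^sub>R rvec (a j))"

lemma gcoef_shift_repr:
  "gcoef a l m b u =
    (if \<exists>v s. shift_repr a m b u v s then
       case SOME p. shift_repr a m b u (fst p) (snd p) of (v, s) \<Rightarrow>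
         \<Prod>j=1..m. brk (- complex_of_real (v j)) (s j) * of_nat (l j) powi s j
     else 0)"
proof -
  have "(\<lambda>(v, s). (\<forall>j\<in>{1..m}. 0 \<le> v j \<and> v j < 1 \<and> s j \<le> 0)
            \<and> rvec b = (\<Sum>j=1..m. v j *\<^sub>R rvec (a j))
            \<and> rvec u = (\<Sum>j=1..m. (v j - real_of_int (s j)) *\<^sub>R rvec (a j)))
      = (\<lambda>p. shift_repr a m b u (fst p) (snd p))"
    by (auto simp: shift_repr_def)
  then show ?thesis
    unfolding gcoef_def Let_def by simp
qed

lemma gcoef_eq_0: "\<nexists>v s. shift_repr a m b u v s \<Longrightarrow> gcoef a l m b u = 0"
  by (simp add: gcoef_shift_repr)

lemma shift_repr_add_generator_iff:
  assumes k: "k \<in> {1..m}" and sk: "s k \<le> 0"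
  shows "shift_repr a m b (u + a k) v (s(k := s k - 1)) \<longleftrightarrow> shift_repr a m b u v s"
proof -
  have "(\<Sum>j=1..m. (v j - real_of_int ((s(k := s k - 1)) j)) *\<^sub>R rvec (a j))
      = (\<Sum>j=1..m. (v j - real_of_int (s j) + (if j = k then 1 else 0)) *\<^sub>R rvec (a j))"
    by (intro sum.cong) auto
  also have "\<dots> = (\<Sum>j=1..m. (v j - real_of_int (s j)) *\<^sub>R rvec (a j)) + rvec (a k)"
    using k by (rule sum_scaleR_add_delta) simp
  finally have sum_eq: "rvec (u + a k) = (\<Sum>j=1..m. (v j - real_of_int ((s(k := s k - 1)) j)) *\<^sub>R rvec (a j))
      \<longleftrightarrow> rvec u = (\<Sum>j=1..m. (v j - real_of_int (s j)) *\<^sub>R rvec (a j))"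
    by (simp add: rvec_add)
  have "(\<forall>j\<in>{1..m}. 0 \<le> v j \<and> v j < 1 \<and> (s(k := s k - 1)) j \<le> 0)
      \<longleftrightarrow> (\<forall>j\<in>{1..m}. 0 \<le> v j \<and> v j < 1 \<and> s j \<le> 0)"
    using sk by auto
  with sum_eq show ?thesis
    unfolding shift_repr_def by blast
qed

lemma brk_pred:
  assumes "s \<le> 0"
  shows "brk z (s - 1) = brk z s * (z + of_int s)"
proof -
  have "nat (- (s - 1)) = Suc (nat (- s))"
    using assms by simp
  moreover have "of_nat (nat (- s)) = (- of_int s :: complex)"
    using assms by simp
  ultimately show ?thesis
    using assms by (simp add: brk_def)
qed

lemma brk_powi_pred:
  assumes "s \<le> 0" and "L \<noteq> 0"
  shows "L * (brk z (s - 1) * L powi (s - 1)) = (z + of_int s) * (brk z s * L powi s)"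
  using power_int_minus_mult[of L s] assms by (simp add: brk_pred ac_simps)

locale independent_exponents =
  fixes a :: "nat \<Rightarrow> int^'n::finite" and m :: nat
  assumes indep: "independent (rvec ` a ` {1..m})"
    and inj: "inj_on a {1..m}"
begin

lemma coords_unique:
  assumes eq: "(\<Sum>j=1..m. c j *\<^sub>R rvec (a j)) = (\<Sum>j=1..m. d j *\<^sub>R rvec (a j))"
    and j: "j \<in> {1..m}"
  shows "c j = d j"
proof -
  have "independent ((\<lambda>j. rvec (a j)) ` {1..m})"
    using indep by (simp add: image_image)
  moreover have "inj_on (\<lambda>j. rvec (a j)) {1..m}"
    using inj unfolding inj_on_def rvec_eq_iff by blast
  moreover have "(\<Sum>j=1..m. (c j - d j) *\<^sub>R rvec (a j)) = 0"
    using eq by (simp add: scaleR_diff_left sum_subtractf)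
  ultimately have "c j - d j = 0"
    using j by (rule independent_family_coeffs_zero[where c = "\<lambda>j. c j - d j", OF _ _ finite_atLeastAtMost])
  then show ?thesis by simp
qed

lemma complex_coeffs_zero:
  fixes z :: "nat \<Rightarrow> complex"
  assumes zero: "\<forall>i. (\<Sum>j=1..m. z j * of_int (a j $ i)) = 0" and k: "k \<in> {1..m}"
  shows "z k = 0"
proof -
  have real_coeffs_zero: "f k = 0" if "\<forall>i. (\<Sum>j=1..m. f j * real_of_int (a j $ i)) = 0" for f
  proof -
    have "(\<Sum>j=1..m. f j *\<^sub>R rvec (a j)) = (\<Sum>j=1..m. 0 *\<^sub>R rvec (a j))"
      using that by (simp add: vec_eq_iff rvec_component)
    then show ?thesis by (rule coords_unique[OF _ k])
  qed
  have "(\<Sum>j=1..m. Re (z j) * real_of_int (a j $ i)) = 0"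
       "(\<Sum>j=1..m. Im (z j) * real_of_int (a j $ i)) = 0" for i
    using arg_cong[OF zero[rule_format, of i], of Re] arg_cong[OF zero[rule_format, of i], of Im]
    by (simp_all add: Re_sum Im_sum)
  then have "Re (z k) = 0" "Im (z k) = 0"
    using real_coeffs_zero[of "\<lambda>j. Re (z j)"] real_coeffs_zero[of "\<lambda>j. Im (z j)"] by simp_all
  then show ?thesis
    by (simp add: complex_eq_iff)
qed

lemma shift_repr_unique:
  assumes "shift_repr a m b u v s" and "shift_repr a m b u v' s'" and j: "j \<in> {1..m}"
  shows "v' j = v j" and "s' j = s j"
proof -
  show v: "v' j = v j"
    using assms coords_unique[of v' v, OF _ j] by (simp add: shift_repr_def)
  have "v' j - real_of_int (s' j) = v j - real_of_int (s j)"
    using assms coords_unique[of "\<lambda>j. v' j - real_of_int (s' j)" "\<lambda>j. v j - real_of_int (s j)", OF _ j]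
    by (simp add: shift_repr_def)
  with v show "s' j = s j" by simp
qed

lemma gcoef_eq_prod:
  assumes rep: "shift_repr a m b u v s"
  shows "gcoef a l m b u = (\<Prod>j=1..m. brk (- complex_of_real (v j)) (s j) * of_nat (l j) powi s j)"
proof -
  obtain v' s' where some: "(SOME p. shift_repr a m b u (fst p) (snd p)) = (v', s')"
    by fastforce
  have "\<exists>p. shift_repr a m b u (fst p) (snd p)"
    using rep by auto
  from someI_ex[OF this] have "shift_repr a m b u v' s'"
    by (simp add: some)
  with rep have "\<forall>j\<in>{1..m}. v' j = v j \<and> s' j = s j"
    by (blast dest: shift_repr_unique)
  then show ?thesis
    using rep by (auto simp: gcoef_shift_repr some intro!: prod.cong)
qed

lemma gcoef_Bset:
  assumes b: "b \<in> Bset a m" and b': "b' \<in> Bset a m"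
  shows "gcoef a l m b b' = (if b = b' then 1 else 0)"
proof (cases "b = b'")
  case True
  obtain v where "\<forall>j\<in>{1..m}. 0 \<le> v j \<and> v j < 1" "rvec b = (\<Sum>j=1..m. v j *\<^sub>R rvec (a j))"
    using b unfolding mem_Bset_iff by blast
  then have "shift_repr a m b b v (\<lambda>_. 0)"
    by (simp add: shift_repr_def)
  with True show ?thesis
    by (simp add: gcoef_eq_prod brk_def)
next
  case False
  have "\<nexists>v s. shift_repr a m b b' v s"
  proof
    assume "\<exists>v s. shift_repr a m b b' v s"
    then obtain v s where rep: "shift_repr a m b b' v s" by blast
    obtain v' where v': "\<forall>j\<in>{1..m}. 0 \<le> v' j \<and> v' j < 1" "rvec b' = (\<Sum>j=1..m. v' j *\<^sub>R rvec (a j))"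
      using b' unfolding mem_Bset_iff by blast
    have "v' j = v j - real_of_int (s j)" if "j \<in> {1..m}" for j
      using rep v'(2) coords_unique[of v' "\<lambda>j. v j - real_of_int (s j)", OF _ that] by (simp add: shift_repr_def)
    moreover have "0 \<le> v j \<and> v j < 1 \<and> s j \<le> 0" if "j \<in> {1..m}" for j
      using rep that by (simp add: shift_repr_def)
    ultimately have "s j = 0" if "j \<in> {1..m}" for j
      using v'(1) that by fastforce
    then have "rvec b' = rvec b"
      using rep by (simp add: shift_repr_def)
    with False show False by simp
  qed
  with False show ?thesis
    by (simp add: gcoef_eq_0)
qed

end

definition Dop_adj :: "(nat \<Rightarrow> int^'n::finite) \<Rightarrow> (nat \<Rightarrow> nat) \<Rightarrow> nat \<Rightarrow> 'n
                      \<Rightarrow> (int^'n \<Rightarrow> complex) \<Rightarrow> (int^'n \<Rightarrow> complex)" where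
  "Dop_adj a l m i g = (\<lambda>u. of_int (u $ i) * g u
        + (\<Sum>j=1..m. of_nat (l j) * of_int (a j $ i) * g (u + a j)))"

lemma sum_shift_support:
  fixes h g :: "'a::ab_group_add \<Rightarrow> 'b::semiring_0"
  assumes "finite F" and "(\<lambda>u. u + t) ` {u. h u \<noteq> 0} \<subseteq> F"
  shows "(\<Sum>v\<in>F. h (v - t) * g v) = (\<Sum>u | h u \<noteq> 0. h u * g (u + t))"
proof -
  have "(\<Sum>v\<in>F. h (v - t) * g v) = (\<Sum>v\<in>(\<lambda>u. u + t) ` {u. h u \<noteq> 0}. h (v - t) * g v)"
  proof (rule sum.mono_neutral_right[OF assms])
    have "h (v - t) = 0" if "v \<notin> (\<lambda>u. u + t) ` {u. h u \<noteq> 0}" for v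
      using that by (metis (mono_tags) diff_add_cancel image_eqI mem_Collect_eq)
    then show "\<forall>v\<in>F - (\<lambda>u. u + t) ` {u. h u \<noteq> 0}. h (v - t) * g v = 0"
      by auto
  qed
  also have "\<dots> = (\<Sum>u | h u \<noteq> 0. h u * g (u + t))"
    by (simp add: sum.reindex inj_on_def)
  finally show ?thesis .
qed

lemma sum_Dop_mult:
  assumes "finite {u. h u \<noteq> 0}"
  shows "(\<Sum>v | Dop a l m i h v \<noteq> 0. Dop a l m i h v * g v) = (\<Sum>u | h u \<noteq> 0. h u * Dop_adj a l m i g u)"
proof -
  define S where "S = {u. h u \<noteq> 0}"
  define F where "F = S \<union> (\<Union>j\<in>{1..m}. (\<lambda>u. u + a j) ` S)"
  have F: "finite F"
    using assms by (simp add: F_def S_def)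
  have shift_sub: "(\<lambda>u. u + a j) ` {u. h u \<noteq> 0} \<subseteq> F" if "j \<in> {1..m}" for j
    using that by (auto simp: F_def S_def)
  have "Dop a l m i h v = 0" if "v \<notin> F" for v
  proof -
    have "h (v - a j) = 0" if "j \<in> {1..m}" for j
      using shift_sub[OF that] \<open>v \<notin> F\<close> by force
    moreover have "h v = 0"
      using \<open>v \<notin> F\<close> by (auto simp: F_def S_def)
    ultimately show ?thesis
      by (simp add: Dop_def)
  qed
  then have "(\<Sum>v | Dop a l m i h v \<noteq> 0. Dop a l m i h v * g v) = (\<Sum>v\<in>F. Dop a l m i h v * g v)"
    by (intro sum.mono_neutral_left F) auto
  also have "\<dots> = (\<Sum>v\<in>F. of_int (v $ i) * h v * g v)
      + (\<Sum>v\<in>F. \<Sum>j=1..m. of_nat (l j) * of_int (a j $ i) * (h (v - a j) * g v))"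
    by (simp add: Dop_def distrib_right sum.distrib sum_distrib_right mult.assoc)
  also have "(\<Sum>v\<in>F. \<Sum>j=1..m. of_nat (l j) * of_int (a j $ i) * (h (v - a j) * g v))
      = (\<Sum>j=1..m. of_nat (l j) * of_int (a j $ i) * (\<Sum>v\<in>F. h (v - a j) * g v))"
    by (subst sum.swap) (simp add: sum_distrib_left)
  also have "\<dots> = (\<Sum>j=1..m. of_nat (l j) * of_int (a j $ i) * (\<Sum>u\<in>S. h u * g (u + a j)))"
    using sum_shift_support[OF F shift_sub] by (simp add: S_def)
  also have "(\<Sum>v\<in>F. of_int (v $ i) * h v * g v) = (\<Sum>u\<in>S. of_int (u $ i) * h u * g u)"
    by (rule sum.mono_neutral_right[OF F]) (auto simp: F_def S_def)
  also have "(\<Sum>u\<in>S. of_int (u $ i) * h u * g u)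
      + (\<Sum>j=1..m. of_nat (l j) * of_int (a j $ i) * (\<Sum>u\<in>S. h u * g (u + a j)))
      = (\<Sum>u\<in>S. h u * Dop_adj a l m i g u)"
    by (simp add: Dop_adj_def distrib_left sum.distrib sum_distrib_left ac_simps) (rule sum.swap)
  finally show ?thesis
    by (simp add: S_def)
qed

lemma Dop_adj_diff_sum:
  "Dop_adj a l m i (\<lambda>u. f u - (\<Sum>x\<in>X. c x * g x u)) w
    = Dop_adj a l m i f w - (\<Sum>x\<in>X. c x * Dop_adj a l m i (g x) w)"
proof -
  have "(\<Sum>j=1..m. of_nat (l j) * of_int (a j $ i) * (\<Sum>x\<in>X. c x * g x (w + a j)))
      = (\<Sum>x\<in>X. c x * (\<Sum>j=1..m. of_nat (l j) * of_int (a j $ i) * g x (w + a j)))"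
    by (simp add: sum_distrib_left ac_simps) (rule sum.swap)
  then show ?thesis
    by (simp add: Dop_adj_def algebra_simps sum_subtractf sum.distrib sum_distrib_left)
qed

lemma gfun_xmon: "gfun a l m b (xmon u) = gcoef a l m b u"
proof -
  have "{v. xmon u v \<noteq> 0} = {u}"
    by (auto simp: xmon_def)
  then show ?thesis
    by (simp add: gfun_def xmon_def)
qed

lemma Dop_xmon:
  "Dop a l m i (xmon w)
    = (\<lambda>v. of_int (w $ i) * xmon w v + (\<Sum>j=1..m. (of_nat (l j) * of_int (a j $ i)) * xmon (w + a j) v))"
proof
  fix v
  have "xmon w (v - a j) = xmon (w + a j) v" for j
    by (auto simp: xmon_def)
  moreover have "of_int (v $ i) * xmon w v = of_int (w $ i) * xmon w v"
    by (simp add: xmon_def)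
  ultimately show "Dop a l m i (xmon w) v
      = of_int (w $ i) * xmon w v + (\<Sum>j=1..m. (of_nat (l j) * of_int (a j $ i)) * xmon (w + a j) v)"
    by (simp add: Dop_def)
qed

lemma xmon_in_S0: "u \<in> Mset a m \<Longrightarrow> xmon u \<in> S0 a m"
  unfolding S0_def xmon_def by auto

lemma S0_add:
  assumes "h1 \<in> S0 a m" and "h2 \<in> S0 a m"
  shows "(\<lambda>v. h1 v + h2 v) \<in> S0 a m"
proof -
  have "{v. h1 v + h2 v \<noteq> 0} \<subseteq> {v. h1 v \<noteq> 0} \<union> {v. h2 v \<noteq> 0}"
    by auto
  with assms show ?thesis
    unfolding S0_def by (auto intro: finite_subset)
qed

lemma S0_scale:
  assumes "h \<in> S0 a m"
  shows "(\<lambda>v. c * h v) \<in> S0 a m"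
proof -
  have "{v. c * h v \<noteq> 0} \<subseteq> {v. h v \<noteq> 0}"
    by auto
  with assms show ?thesis
    unfolding S0_def by (auto intro: finite_subset)
qed

lemma S0_eq_sum_xmon:
  assumes "h \<in> S0 a m"
  shows "h = (\<lambda>v. \<Sum>u | h u \<noteq> 0. h u * xmon u v)"
proof
  fix v
  have "(\<Sum>u | h u \<noteq> 0. h u * xmon u v) = (\<Sum>u | h u \<noteq> 0. if v = u then h u else 0)"
    by (rule sum.cong) (auto simp: xmon_def)
  also have "\<dots> = h v"
    using assms by (simp add: S0_def)
  finally show "h v = (\<Sum>u | h u \<noteq> 0. h u * xmon u v)" ..
qed

definition S0_linear :: "(nat \<Rightarrow> int^'n::finite) \<Rightarrow> nat \<Rightarrow> ((int^'n \<Rightarrow> complex) \<Rightarrow> complex) \<Rightarrow> bool" where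
  "S0_linear a m \<phi> \<longleftrightarrow>
     (\<forall>h1\<in>S0 a m. \<forall>h2\<in>S0 a m. \<phi> (\<lambda>v. h1 v + h2 v) = \<phi> h1 + \<phi> h2)
   \<and> (\<forall>c. \<forall>h\<in>S0 a m. \<phi> (\<lambda>v. c * h v) = c * \<phi> h)"

lemma S0_linearD:
  assumes "S0_linear a m \<phi>" and "h1 \<in> S0 a m" and "h2 \<in> S0 a m"
  shows "\<phi> (\<lambda>v. h1 v + h2 v) = \<phi> h1 + \<phi> h2" and "\<phi> (\<lambda>v. c * h1 v) = c * \<phi> h1"
  using assms by (simp_all add: S0_linear_def)

lemma S0_linear_sum:
  assumes lin: "S0_linear a m \<phi>" and "finite X" and "\<forall>x\<in>X. f x \<in> S0 a m"
  shows "(\<lambda>v. \<Sum>x\<in>X. c x * f x v) \<in> S0 a m \<and> \<phi> (\<lambda>v. \<Sum>x\<in>X. c x * f x v) = (\<Sum>x\<in>X. c x * \<phi> (f x))"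
  using assms(2,3)
proof (induction X rule: finite_induct)
  case empty
  have "(\<lambda>v. 0) \<in> S0 a m"
    by (simp add: S0_def)
  with S0_linearD(2)[OF lin this this, of 0] show ?case
    by simp
next
  case (insert x X)
  have fx: "f x \<in> S0 a m" and IH: "(\<lambda>v. \<Sum>x\<in>X. c x * f x v) \<in> S0 a m"
      "\<phi> (\<lambda>v. \<Sum>x\<in>X. c x * f x v) = (\<Sum>x\<in>X. c x * \<phi> (f x))"
    using insert by simp_all
  have cfx: "(\<lambda>v. c x * f x v) \<in> S0 a m"
    using fx by (rule S0_scale)
  show ?case
    using insert.hyps IH S0_add[OF cfx IH(1)] S0_linearD(1)[OF lin cfx IH(1)] S0_linearD(2)[OF lin fx fx]
    by simp
qed

locale weighted_exponents = independent_exponents a m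
  for a :: "nat \<Rightarrow> int^'n::finite" and m :: nat +
  fixes l :: "nat \<Rightarrow> nat"
  assumes lpos: "\<forall>j\<in>{1..m}. 0 < l j"
begin

lemma gcoef_add_generator:
  assumes c: "\<forall>j\<in>{1..m}. 0 \<le> c j" and u: "rvec u = (\<Sum>j=1..m. c j *\<^sub>R rvec (a j))"
    and k: "k \<in> {1..m}"
  shows "of_nat (l k) * gcoef a l m b (u + a k) = - of_real (c k) * gcoef a l m b u"
proof (cases "\<exists>v s. shift_repr a m b u v s")
  case True
  then obtain v s where rep: "shift_repr a m b u v s" by blast
  have sk: "s k \<le> 0"
    using rep k by (simp add: shift_repr_def)
  have ck: "c k = v k - real_of_int (s k)"
    using rep u coords_unique[of c "\<lambda>j. v j - real_of_int (s j)", OF _ k] by (simp add: shift_repr_def)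
  define F where "F j t = brk (- complex_of_real (v j)) t * of_nat (l j) powi t" for j t
  define P where "P = (\<Prod>j\<in>{1..m} - {k}. F j (s j))"
  have "gcoef a l m b u = F k (s k) * P"
    using gcoef_eq_prod[OF rep] prod.remove[OF finite_atLeastAtMost k]
    by (simp add: F_def P_def)
  moreover have "gcoef a l m b (u + a k) = F k (s k - 1) * P"
  proof -
    have "shift_repr a m b (u + a k) v (s(k := s k - 1))"
      using rep by (simp add: shift_repr_add_generator_iff[where s = s, OF k sk])
    from gcoef_eq_prod[OF this] show ?thesis
      using prod.remove[OF finite_atLeastAtMost k, of "\<lambda>j. F j ((s(k := s k - 1)) j)"]
      by (simp add: F_def P_def)
  qed
  moreover have "of_nat (l k) * F k (s k - 1) = (of_int (s k) - of_real (v k)) * F k (s k)"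
    using brk_powi_pred[OF sk, of "of_nat (l k)"] lpos k by (simp add: F_def)
  ultimately show ?thesis
    by (simp add: ck mult.assoc[symmetric])
next
  case False
  \<comment> \<open>A representation of u + a_k has s_k \<le> -1 because c_k \<ge> 0, so it would shift back to one of u.\<close>
  have "\<nexists>v s. shift_repr a m b (u + a k) v s"
  proof
    assume "\<exists>v s. shift_repr a m b (u + a k) v s"
    then obtain v s where rep: "shift_repr a m b (u + a k) v s" by blast
    have "rvec (u + a k) = (\<Sum>j=1..m. (c j + (if j = k then 1 else 0)) *\<^sub>R rvec (a j))"
      unfolding rvec_add u by (rule sum_scaleR_add_delta[symmetric, OF k finite_atLeastAtMost])
    then have "c k + 1 = v k - real_of_int (s k)"
      using rep coords_unique[of "\<lambda>j. c j + (if j = k then 1 else 0)" "\<lambda>j. v j - real_of_int (s j)", OF _ k]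
      by (simp add: shift_repr_def)
    moreover have "0 \<le> c k" "v k < 1"
      using c rep k by (auto simp: shift_repr_def)
    ultimately have "s k + 1 \<le> 0" by linarith
    then have "shift_repr a m b u v (s(k := s k + 1))"
      using rep shift_repr_add_generator_iff[where a = a and s = "s(k := s k + 1)", OF k] by simp
    with False show False by blast
  qed
  with False show ?thesis
    by (simp add: gcoef_eq_0)
qed

lemma Dop_adj_gcoef:
  assumes "u \<in> Mset a m"
  shows "Dop_adj a l m i (gcoef a l m b) u = 0"
proof -
  obtain c where c: "\<forall>j\<in>{1..m}. 0 \<le> c j" "rvec u = (\<Sum>j=1..m. c j *\<^sub>R rvec (a j))"
    using assms unfolding mem_Mset_iff by blast
  have "real_of_int (u $ i) = (\<Sum>j=1..m. c j * real_of_int (a j $ i))"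
    using arg_cong[OF c(2), of "\<lambda>x. x $ i"] by (simp add: rvec_component)
  then have "complex_of_real (real_of_int (u $ i)) = of_real (\<Sum>j=1..m. c j * real_of_int (a j $ i))"
    by (rule arg_cong)
  then have ui: "(of_int (u $ i) :: complex) = (\<Sum>j=1..m. of_real (c j) * of_int (a j $ i))"
    by simp
  have "(\<Sum>j=1..m. of_nat (l j) * of_int (a j $ i) * gcoef a l m b (u + a j))
      = (\<Sum>j=1..m. - (of_real (c j) * of_int (a j $ i) * gcoef a l m b u))"
  proof (rule sum.cong)
    fix j assume j: "j \<in> {1..m}"
    have "of_nat (l j) * of_int (a j $ i) * gcoef a l m b (u + a j)
        = of_int (a j $ i) * (of_nat (l j) * gcoef a l m b (u + a j))"
      by (simp only: ac_simps)
    also have "\<dots> = - (of_real (c j) * of_int (a j $ i) * gcoef a l m b u)"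
      by (simp add: gcoef_add_generator[OF c j])
    finally show "of_nat (l j) * of_int (a j $ i) * gcoef a l m b (u + a j)
        = - (of_real (c j) * of_int (a j $ i) * gcoef a l m b u)" .
  qed simp
  also have "\<dots> = - of_int (u $ i) * gcoef a l m b u"
    by (simp add: ui sum_negf sum_distrib_right)
  finally show ?thesis
    by (simp add: Dop_adj_def)
qed

lemma gfun_Dop:
  assumes "h \<in> S0 a m"
  shows "gfun a l m b (Dop a l m i h) = 0"
proof -
  have "gfun a l m b (Dop a l m i h) = (\<Sum>u | h u \<noteq> 0. h u * Dop_adj a l m i (gcoef a l m b) u)"
    unfolding gfun_def using assms by (simp add: S0_def sum_Dop_mult)
  also have "\<dots> = 0"
    using assms by (intro sum.neutral) (auto simp: S0_def Dop_adj_gcoef)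
  finally show ?thesis .
qed

lemma Dop_adj_functional_xmon:
  assumes lin: "S0_linear a m \<phi>" and kill: "\<forall>i. \<forall>h\<in>S0 a m. \<phi> (Dop a l m i h) = 0"
    and w: "w \<in> Mset a m"
  shows "Dop_adj a l m i (\<lambda>u. \<phi> (xmon u)) w = 0"
proof -
  have xw: "xmon w \<in> S0 a m"
    using w by (rule xmon_in_S0)
  have "\<forall>j\<in>{1..m}. xmon (w + a j) \<in> S0 a m"
    using w by (simp add: Mset_add_generator xmon_in_S0)
  note sum = S0_linear_sum[OF lin finite_atLeastAtMost this, of "\<lambda>j. of_nat (l j) * of_int (a j $ i)"]
  have "0 = \<phi> (Dop a l m i (xmon w))"
    using kill xw by simp
  also have "\<dots> = of_int (w $ i) * \<phi> (xmon w)
      + (\<Sum>j=1..m. of_nat (l j) * of_int (a j $ i) * \<phi> (xmon (w + a j)))"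
    using S0_linearD[OF lin S0_scale[OF xw] conjunct1[OF sum]] S0_linearD(2)[OF lin xw xw] sum
    unfolding Dop_xmon by simp
  finally show ?thesis
    by (simp add: Dop_adj_def)
qed

lemma Dop_adj_solution_step:
  assumes sol: "\<forall>i. Dop_adj a l m i D w = 0" and "D w = 0" and k: "k \<in> {1..m}"
  shows "D (w + a k) = 0"
proof -
  have "\<forall>i. (\<Sum>j=1..m. (of_nat (l j) * D (w + a j)) * of_int (a j $ i)) = 0"
    using sol \<open>D w = 0\<close> by (simp add: Dop_adj_def ac_simps)
  then have "of_nat (l k) * D (w + a k) = 0"
    by (rule complex_coeffs_zero[OF _ k])
  moreover have "l k \<noteq> 0"
    using lpos k by blast
  ultimately show ?thesis
    by simp
qed

lemma Dop_adj_solution_eq_0: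
  assumes sol: "\<forall>w\<in>Mset a m. \<forall>i. Dop_adj a l m i D w = 0"
    and base: "\<forall>b\<in>Bset a m. D b = 0" and u: "u \<in> Mset a m"
  shows "D u = 0"
proof -
  obtain c where "\<forall>j\<in>{1..m}. 0 \<le> c j" "rvec u = (\<Sum>j=1..m. c j *\<^sub>R rvec (a j))"
    using u unfolding mem_Mset_iff by blast
  then show ?thesis
  proof (induction "\<Sum>j=1..m. nat \<lfloor>c j\<rfloor>" arbitrary: u c rule: less_induct)
    case less
    show ?case
    proof (cases "\<forall>j\<in>{1..m}. c j < 1")
      case True
      then have "u \<in> Bset a m"
        unfolding mem_Bset_iff using less.prems by (intro exI[of _ c]) simp
      with base show ?thesis by blast
    next
      case False
      then obtain k where k: "k \<in> {1..m}" and ck: "1 \<le> c k"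
        by force
      define c' where "c' = c(k := c k - 1)"
      have "rvec (u - a k) + rvec (a k) = rvec u"
        by (simp flip: rvec_add)
      also have "\<dots> = (\<Sum>j=1..m. (c' j + (if j = k then 1 else 0)) *\<^sub>R rvec (a j))"
        unfolding less.prems(2) by (rule sum.cong) (auto simp: c'_def)
      also have "\<dots> = (\<Sum>j=1..m. c' j *\<^sub>R rvec (a j)) + rvec (a k)"
        by (rule sum_scaleR_add_delta[OF k finite_atLeastAtMost])
      finally have w: "rvec (u - a k) = (\<Sum>j=1..m. c' j *\<^sub>R rvec (a j))"
        by simp
      have c': "\<forall>j\<in>{1..m}. 0 \<le> c' j"
        using less.prems(1) ck by (simp add: c'_def)
      have "(\<Sum>j=1..m. nat \<lfloor>c' j\<rfloor>) < (\<Sum>j=1..m. nat \<lfloor>c j\<rfloor>)"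
      proof (rule sum_strict_mono_ex1)
        show "\<forall>j\<in>{1..m}. nat \<lfloor>c' j\<rfloor> \<le> nat \<lfloor>c j\<rfloor>"
          by (auto simp: c'_def intro!: nat_mono floor_mono)
        show "\<exists>j\<in>{1..m}. nat \<lfloor>c' j\<rfloor> < nat \<lfloor>c j\<rfloor>"
          using k ck by (intro bexI[of _ k]) (auto simp: c'_def)
      qed simp
      then have "D (u - a k) = 0"
        using c' w by (rule less.hyps)
      moreover have "u - a k \<in> Mset a m"
        unfolding mem_Mset_iff using c' w by (intro exI[of _ c']) simp
      ultimately have "D (u - a k + a k) = 0"
        using sol Dop_adj_solution_step[where D = D and w = "u - a k", OF _ _ k] by blast
      then show ?thesis by simp
    qed
  qed
qed

lemma functional_eq_sum_gfun:
  assumes lin: "S0_linear a m \<phi>" and kill: "\<forall>i. \<forall>h\<in>S0 a m. \<phi> (Dop a l m i h) = 0"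
    and h: "h \<in> S0 a m"
  shows "\<phi> h = (\<Sum>b\<in>Bset a m. \<phi> (xmon b) * gfun a l m b h)"
proof -
  define R where "R u = (\<Sum>b\<in>Bset a m. \<phi> (xmon b) * gcoef a l m b u)" for u
  have "\<phi> (xmon u) - R u = 0" if "u \<in> Mset a m" for u
  proof (rule Dop_adj_solution_eq_0[where D = "\<lambda>u. \<phi> (xmon u) - R u", OF _ _ that])
    show "\<forall>w\<in>Mset a m. \<forall>i. Dop_adj a l m i (\<lambda>u. \<phi> (xmon u) - R u) w = 0"
      unfolding R_def Dop_adj_diff_sum
      by (simp add: Dop_adj_functional_xmon[OF lin kill] Dop_adj_gcoef)
    show "\<forall>b\<in>Bset a m. \<phi> (xmon b) - R b = 0"
      by (simp add: R_def gcoef_Bset finite_Bset if_distrib cong: if_cong)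
  qed
  then have xmon_R: "\<phi> (xmon u) = R u" if "u \<in> Mset a m" for u
    using that by simp
  have supp: "{u. h u \<noteq> 0} \<subseteq> Mset a m" "finite {u. h u \<noteq> 0}"
    using h by (auto simp: S0_def)
  have "\<phi> h = \<phi> (\<lambda>v. \<Sum>u | h u \<noteq> 0. h u * xmon u v)"
    by (rule arg_cong[OF S0_eq_sum_xmon[OF h]])
  also have "\<dots> = (\<Sum>u | h u \<noteq> 0. h u * \<phi> (xmon u))"
    by (rule conjunct2[OF S0_linear_sum[OF lin supp(2)]]) (use supp(1) in \<open>auto intro: xmon_in_S0\<close>)
  also have "\<dots> = (\<Sum>u | h u \<noteq> 0. \<Sum>b\<in>Bset a m. \<phi> (xmon b) * (h u * gcoef a l m b u))"
    using supp(1) by (intro sum.cong) (auto simp: xmon_R R_def sum_distrib_left ac_simps)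
  also have "\<dots> = (\<Sum>b\<in>Bset a m. \<phi> (xmon b) * gfun a l m b h)"
    by (subst sum.swap) (simp add: gfun_def sum_distrib_left)
  finally show ?thesis .
qed

end

theorem proposition3p15:
  fixes a :: "nat \<Rightarrow> int^'n::finite" and l :: "nat \<Rightarrow> nat" and m :: nat
    and a0 :: "int^'n"
  assumes indep: "independent (rvec ` a ` {1..m})"
    and distinct: "inj_on a {1..m}"
    and lpos: "\<forall>j\<in>{1..m}. 0 < l j"
    and rel: "of_nat (\<Sum>j=1..m. l j) *s a0 = (\<Sum>j=1..m. of_nat (l j) *s a j)"
    and coprime: "Gcd (insert (\<Sum>j=1..m. l j) (l ` {1..m})) = 1"
  shows "finite (Bset a m)
    \<and> (\<forall>b\<in>Bset a m. \<forall>i. \<forall>h\<in>S0 a m. gfun a l m b (Dop a l m i h) = 0)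
    \<and> (\<forall>b\<in>Bset a m. \<forall>b'\<in>Bset a m. gfun a l m b (xmon b') = (if b = b' then 1 else 0))
    \<and> (\<forall>\<phi> :: (int^'n \<Rightarrow> complex) \<Rightarrow> complex.
          (\<forall>h1\<in>S0 a m. \<forall>h2\<in>S0 a m. \<phi> (\<lambda>v. h1 v + h2 v) = \<phi> h1 + \<phi> h2)
        \<and> (\<forall>c. \<forall>h\<in>S0 a m. \<phi> (\<lambda>v. c * h v) = c * \<phi> h)
        \<and> (\<forall>i. \<forall>h\<in>S0 a m. \<phi> (Dop a l m i h) = 0)
        \<longrightarrow> (\<forall>h\<in>S0 a m. \<phi> h = (\<Sum>b\<in>Bset a m. \<phi> (xmon b) * gfun a l m b h)))"
proof -
  interpret weighted_exponents a m l
    using indep distinct lpos by unfold_locales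
  have dual: "gfun a l m b (xmon b') = (if b = b' then 1 else 0)"
    if "b \<in> Bset a m" and "b' \<in> Bset a m" for b b'
    using that by (simp add: gfun_xmon gcoef_Bset)
  have expansion: "\<forall>h\<in>S0 a m. \<phi> h = (\<Sum>b\<in>Bset a m. \<phi> (xmon b) * gfun a l m b h)"
    if "S0_linear a m \<phi>" and "\<forall>i. \<forall>h\<in>S0 a m. \<phi> (Dop a l m i h) = 0" for \<phi>
    using functional_eq_sum_gfun[OF that] by blast
  show ?thesis
    using finite_Bset gfun_Dop dual expansion unfolding S0_linear_def by blast
qed

end
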